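(* If $T\subseteq\mathbb{R}^n$ is an action set, then $\mathbf{W}(T)=\bigcap_{t\in T}\mathbf{W}(t)$ is a reaction set.
   Context: Single-commodity network pricing setting: $G=(\mathcal{V},\mathcal{A})$ directed graph, arc costs $c\ge0$, nonempty tolled arc set $\mathcal{A}_1\subsetneq\mathcal{A}$, $n=|\mathcal{A}_1|$, $N$ node–arc incidence matrix, single origin $o$ and destination $d$ connected by a path of arcs not in $\mathcal{A}_1$, $b_o=1$, $b_d=-1$, $b_i=0$ otherwise, $\mathcal{X}=\{x\in\mathbb{R}^{\mathcal{A}}: Nx=b,\ x\ge0\}$, $x_{\mathcal{A}_1}$ the restriction of $x$ to $\mathcal{A}_1$; tolls $t\in\mathbb{R}^n$ are extended by zeros to $\bar t\in\mathbb{R}^{\mathcal{A}}$. Let $f(t)=\min\{c^\top x+t^\top x_{\mathcal{A}_1}: x\in\mathcal{X}\}$ for $t\ge0$, $f(t)=-\infty$ otherwise, and $g(w)=\sup_{t\in\mathbb{R}^n}\{f(t)-t^\top w\}$. An action set is a set $T=\{t:(t,z)\in F\text{ for some }z\}$ where $F$ is a face of $\operatorname{epi}(-f)$ whose affine hull's direction space does not contain $(0,1)$ (non-vertical face); a reaction set is defined identically with $\operatorname{epi}(g)$ in place of $\operatorname{epi}(-f)$ (projection onto $w$-space of a non-vertical face of $\operatorname{epi}(g)$). For $t\ge0$, $\mathbf{W}(t)$ is the set of $w$ such that $(w,x)$ is optimal for some $x$ in the program $\min_{w,x}\{c^\top x+t^\top w: x_{\mathcal{A}_1}\le w,\ Nx=b,\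 w\ge0,\ x\ge0\}$. *)

theory Defs
  imports "HOL-Analysis.Analysis"
begin

text \<open>Directed graph with finite arc type 'e and finite node type 'v; arc a goes
from tlA a to hdA a.  Tolled arcs are indexed by a finite type 'n via an injective map
ta :: 'n \<Rightarrow> 'e, so A1 = range ta and tolls live in real^'n (n = CARD('n)).\<close>

definition incid :: "('e::finite \<Rightarrow> 'v::finite) \<Rightarrow> ('e \<Rightarrow> 'v) \<Rightarrow> real^'e^'v" where
  "incid tlA hdA = (\<chi> i a. (if tlA a = i then 1 else 0) - (if hdA a = i then 1 else 0))"

definition bvec :: "'v \<Rightarrow> 'v \<Rightarrow> real^'v" where
  "bvec orig dest = (\<chi> i. if i = orig then 1 else if i = dest then -1 else 0)"

definition flows :: "('e::finite \<Rightarrow> 'v::finite) \<Rightarrow> ('e \<Rightarrow> 'v) \<Rightarrow> 'v \<Rightarrow> 'v \<Rightarrow> (real^'e) set" where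
  "flows tlA hdA orig dest = {x. incid tlA hdA *v x = bvec orig dest \<and> (\<forall>a. 0 \<le> x $ a)}"

definition restr :: "('n::finite \<Rightarrow> 'e) \<Rightarrow> real^'e \<Rightarrow> real^'n" where
  "restr ta x = (\<chi> k. x $ ta k)"

definition fval :: "('e::finite \<Rightarrow> 'v::finite) \<Rightarrow> ('e \<Rightarrow> 'v) \<Rightarrow> 'v \<Rightarrow> 'v \<Rightarrow> real^'e \<Rightarrow> ('n::finite \<Rightarrow> 'e)
                     \<Rightarrow> real^'n \<Rightarrow> ereal" where
  "fval tlA hdA orig dest c ta t =
     (if (\<forall>k. 0 \<le> t $ k)
      then (INF x\<in>flows tlA hdA orig dest. ereal (c \<bullet> x + t \<bullet> restr ta x))
      else -\<infinity>)"

definition gval :: "('e::finite \<Rightarrow> 'v::finite) \<Rightarrow> ('e \<Rightarrow> 'v) \<Rightarrow> 'v \<Rightarrow> 'v \<Rightarrow> real^'e \<Rightarrow> ('n::finite \<Rightarrow> 'e)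
                     \<Rightarrow> real^'n \<Rightarrow> ereal" where
  "gval tlA hdA orig dest c ta w = (SUP t. fval tlA hdA orig dest c ta t - ereal (t \<bullet> w))"

definition nonvertical :: "(('a::real_vector) \<times> real) set \<Rightarrow> bool" where
  "nonvertical F \<longleftrightarrow> (0, 1) \<notin> {u - v | u v. u \<in> affine hull F \<and> v \<in> affine hull F}"

definition action_set :: "('e::finite \<Rightarrow> 'v::finite) \<Rightarrow> ('e \<Rightarrow> 'v) \<Rightarrow> 'v \<Rightarrow> 'v \<Rightarrow> real^'e \<Rightarrow> ('n::finite \<Rightarrow> 'e)
                     \<Rightarrow> (real^'n) set \<Rightarrow> bool" where
  "action_set tlA hdA orig dest c ta T \<longleftrightarrow>
     (\<exists>F. F face_of {(t, z). - fval tlA hdA orig dest c ta t \<le> ereal z} \<and> F \<noteq> {}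
          \<and> nonvertical F \<and> T = fst ` F)"

definition reaction_set :: "('e::finite \<Rightarrow> 'v::finite) \<Rightarrow> ('e \<Rightarrow> 'v) \<Rightarrow> 'v \<Rightarrow> 'v \<Rightarrow> real^'e \<Rightarrow> ('n::finite \<Rightarrow> 'e)
                     \<Rightarrow> (real^'n) set \<Rightarrow> bool" where
  "reaction_set tlA hdA orig dest c ta S \<longleftrightarrow>
     (\<exists>F. F face_of {(w, z). gval tlA hdA orig dest c ta w \<le> ereal z} \<and> F \<noteq> {}
          \<and> nonvertical F \<and> S = fst ` F)"

definition wfeas :: "('e::finite \<Rightarrow> 'v::finite) \<Rightarrow> ('e \<Rightarrow> 'v) \<Rightarrow> 'v \<Rightarrow> 'v \<Rightarrow> ('n::finite \<Rightarrow> 'e)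
                     \<Rightarrow> real^'n \<Rightarrow> real^'e \<Rightarrow> bool" where
  "wfeas tlA hdA orig dest ta w x \<longleftrightarrow>
     (\<forall>k. x $ ta k \<le> w $ k) \<and> incid tlA hdA *v x = bvec orig dest \<and> (\<forall>k. 0 \<le> w $ k) \<and> (\<forall>a. 0 \<le> x $ a)"

definition Wset :: "('e::finite \<Rightarrow> 'v::finite) \<Rightarrow> ('e \<Rightarrow> 'v) \<Rightarrow> 'v \<Rightarrow> 'v \<Rightarrow> real^'e \<Rightarrow> ('n::finite \<Rightarrow> 'e)
                     \<Rightarrow> real^'n \<Rightarrow> (real^'n) set" where
  "Wset tlA hdA orig dest c ta t =
     {w. \<exists>x. wfeas tlA hdA orig dest ta w x \<and>
            (\<forall>w' x'. wfeas tlA hdA orig dest ta w' x' \<longrightarrow> c \<bullet> x + t \<bullet> w \<le> c \<bullet> x' + t \<bullet> w')}"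

end

theory Submission
  imports Defs
begin

text \<open>
  On t \<ge> 0 the function f is a minimum of affine functions indexed by the vertices of a
  normalised slice of the cone of homogenised flows, so epi(-f) is a polyhedron and all its faces
  are exposed. For the nonvertical face lying over the action set T, the exposing hyperplane is the
  graph of an affine majorant t \<mapsto> t \<bullet> w0 + \<gamma> of f that touches f exactly on T.
  The points (w, z) of epi g lying on all hyperplanes t \<bullet> w + z = f t with t \<in> T then form a
  face of epi g that contains (w0, \<gamma>) and is nonvertical. Its projection is the intersection of
  the sets W(t), because by LP duality w \<in> W(t) holds exactly when g w = f t - t \<bullet> w. The duality
  step is a Farkas argument that separates (0, \<gamma>, 1) from a linear image of the homogenised
  flow cone.
\<close>

section \<open>Polyhedra, cones and nonvertical faces\<close>

lemma linear_functional_eq_inner: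
  fixes \<phi> :: "'a::euclidean_space \<Rightarrow> real"
  assumes "linear \<phi>"
  shows "\<phi> = (\<lambda>x. adjoint \<phi> 1 \<bullet> x)"
  using adjoint_works[OF assms, of _ 1] by (simp add: fun_eq_iff inner_commute)

lemma polyhedron_linear_halfspace_ge:
  fixes \<phi> :: "'a::euclidean_space \<Rightarrow> real"
  assumes "linear \<phi>"
  shows "polyhedron {x. \<beta> \<le> \<phi> x}"
  by (subst linear_functional_eq_inner[OF assms]) (rule polyhedron_halfspace_ge)

lemma polyhedron_linear_hyperplane:
  fixes \<phi> :: "'a::euclidean_space \<Rightarrow> real"
  assumes "linear \<phi>"
  shows "polyhedron {x. \<phi> x = \<beta>}"
  by (subst linear_functional_eq_inner[OF assms]) (rule polyhedron_hyperplane)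

lemma polyhedron_INT: "(\<And>i. polyhedron (S i)) \<Longrightarrow> polyhedron (\<Inter>i::'i::finite. S i)"
  by (rule polyhedron_Inter) auto

lemma separating_hyperplane_closed_cone:
  fixes S :: "'a::euclidean_space set"
  assumes "convex S" "closed S" "conic S" "S \<noteq> {}" "x \<notin> S"
  obtains a where "a \<bullet> x < 0" "\<And>y. y \<in> S \<Longrightarrow> 0 \<le> a \<bullet> y"
proof -
  obtain a b where ax: "a \<bullet> x < b" and aS: "\<And>y. y \<in> S \<Longrightarrow> b < a \<bullet> y"
    using separating_hyperplane_closed_point[OF assms(1,2,5)] by blast
  have "b < 0"
    using aS[of 0] conic_contains_0[OF assms(3)] assms(4) by simp
  moreover have "0 \<le> a \<bullet> y" if "y \<in> S" for y
  proof (rule ccontr)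
    assume "\<not> 0 \<le> a \<bullet> y"
    then have "0 \<le> b / (a \<bullet> y)"
      using \<open>b < 0\<close> by (simp add: divide_nonpos_neg)
    then have "(b / (a \<bullet> y)) *\<^sub>R y \<in> S" and "a \<bullet> ((b / (a \<bullet> y)) *\<^sub>R y) = b"
      using \<open>\<not> 0 \<le> a \<bullet> y\<close> conicD[OF assms(3) that] by auto
    then show False
      using aS by force
  qed
  ultimately show thesis
    using that ax by force
qed

lemma face_of_common_minimizers:
  assumes "convex S" and min: "\<And>a y. a \<in> A \<Longrightarrow> y \<in> S \<Longrightarrow> a \<bullet> p \<le> a \<bullet> y"
  shows "{y \<in> S. \<forall>a\<in>A. a \<bullet> y = a \<bullet> p} face_of S"
proof (cases "A = {}")
  case True
  then show ?thesis
    using face_of_refl[OF assms(1)] by simp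
next
  case False
  have "{y \<in> S. \<forall>a\<in>A. a \<bullet> y = a \<bullet> p} = (\<Inter>a\<in>A. S \<inter> {y. a \<bullet> y = a \<bullet> p})"
    using False by auto
  also have "\<dots> face_of S"
    using False by (intro face_of_Inter) (auto intro!: face_of_Int_supporting_hyperplane_ge assms(1) min)
  finally show ?thesis .
qed

lemma nonvertical_if_subset_hyperplane:
  fixes a :: "'a::real_inner"
  assumes "F \<subseteq> {y. (a, 1) \<bullet> y = \<beta>}"
  shows "nonvertical F"
proof -
  have "affine hull F \<subseteq> {y. (a, 1) \<bullet> y = \<beta>}"
    using assms by (intro hull_minimal affine_hyperplane)
  then have "(a, 1) \<bullet> (u - v) = 0" if "u \<in> affine hull F" "v \<in> affine hull F" for u v
    using that by (auto simp: inner_diff_right)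
  then show ?thesis
    unfolding nonvertical_def by (force simp: inner_Pair)
qed

lemma nonvertical_face_of_upward_polyhedron:
  fixes P :: "('a::euclidean_space \<times> real) set"
  assumes "polyhedron P" and up: "\<And>y d. y \<in> P \<Longrightarrow> 0 \<le> d \<Longrightarrow> y + (0, d) \<in> P"
    and "F face_of P" "F \<noteq> {}" "nonvertical F"
  obtains u \<gamma> where "\<And>t z. (t, z) \<in> P \<Longrightarrow> u \<bullet> t + \<gamma> \<le> z"
    and "F = {(t, z) \<in> P. z = u \<bullet> t + \<gamma>}"
proof -
  obtain a \<alpha> b where le: "P \<subseteq> {y. (a, \<alpha>) \<bullet> y \<le> b}" and F: "F = P \<inter> {y. (a, \<alpha>) \<bullet> y = b}"
    using assms(3) exposed_face_of_polyhedron[OF assms(1)] unfolding exposed_face_of_def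
    by (metis prod.exhaust)
  obtain t0 z0 where tz0: "(t0, z0) \<in> F"
    using assms(4) by auto
  then have "(t0, z0 + 1) \<in> P" "a \<bullet> t0 + \<alpha> * z0 = b"
    using F up[of "(t0, z0)" 1] by auto
  then have "\<alpha> \<le> 0" "\<alpha> = 0 \<Longrightarrow> (t0, z0 + 1) \<in> F"
    using le F by (auto simp: algebra_simps)
  moreover have "(t0, z0 + 1) \<notin> F"
  proof
    assume "(t0, z0 + 1) \<in> F"
    then have "(0, 1) \<in> {u - v | u v. u \<in> affine hull F \<and> v \<in> affine hull F}"
      using tz0 hull_subset[of F affine] by force
    with assms(5) show False
      unfolding nonvertical_def by blast
  qed
  ultimately have "\<alpha> < 0"
    by force
  then have "\<And>t z. (a, \<alpha>) \<bullet> (t, z) \<le> b \<longleftrightarrow> (- (1 / \<alpha>) *\<^sub>R a) \<bullet> t + b / \<alpha> \<le> z"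
    and "\<And>t z. (a, \<alpha>) \<bullet> (t, z) = b \<longleftrightarrow> z = (- (1 / \<alpha>) *\<^sub>R a) \<bullet> t + b / \<alpha>"
    by (auto simp: field_simps)
  then show thesis
    using that le F by blast
qed

section \<open>Flows and the value functions\<close>

lemma vec_inner_nonneg:
  fixes u v :: "real^'i::finite"
  shows "(\<And>i. 0 \<le> u $ i) \<Longrightarrow> (\<And>i. 0 \<le> v $ i) \<Longrightarrow> 0 \<le> u \<bullet> v"
  by (simp add: inner_vec_def sum_nonneg)

lemma linear_restr: "linear (restr ta)"
  by (intro linearI) (simp_all add: restr_def vec_eq_iff)

lemma restr_0 [simp]: "restr ta 0 = 0"
  by (simp add: linear_0[OF linear_restr])

lemma restr_nth [simp]: "restr ta x $ k = x $ ta k"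
  by (simp add: restr_def)

lemma path_flow:
  assumes "(u, v) \<in> {(tlA a, hdA a) | a. P a}\<^sup>*"
  shows "\<exists>x. (\<forall>a. 0 \<le> x $ a) \<and>
    incid tlA hdA *v x = (\<chi> i. (if i = u then 1 else 0) - (if i = v then 1 else 0))"
  using assms
proof (induction rule: rtrancl_induct)
  case base
  show ?case
    by (rule exI[of _ 0]) (simp add: vec_eq_iff)
next
  case (step y z)
  then obtain x where x: "\<forall>a. 0 \<le> x $ a"
      "incid tlA hdA *v x = (\<chi> i. (if i = u then 1 else 0) - (if i = y then 1 else 0))"
    by blast
  from step obtain a where a: "y = tlA a" "z = hdA a"
    by blast
  have "incid tlA hdA *v axis a 1 = (\<chi> i. (if tlA a = i then 1 else 0) - (if hdA a = i then 1 else 0))"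
    by (simp add: matrix_vector_mult_basis column_def incid_def)
  then show ?case
    using x a by (intro exI[of _ "x + axis a 1"])
      (auto simp: matrix_vector_right_distrib vec_eq_iff axis_def)
qed

context
  fixes tlA hdA :: "'e::finite \<Rightarrow> 'v::finite" and orig dest :: 'v
    and c :: "real^'e" and ta :: "'n::finite \<Rightarrow> 'e"
begin

private abbreviation "X \<equiv> flows tlA hdA orig dest"
private abbreviation "f \<equiv> fval tlA hdA orig dest c ta"
private abbreviation "g \<equiv> gval tlA hdA orig dest c ta"

lemma flows_nonempty:
  assumes "orig \<noteq> dest" "(orig, dest) \<in> {(tlA a, hdA a) | a. P a}\<^sup>*"
  shows "X \<noteq> {}"
proof -
  obtain x where "\<forall>a. 0 \<le> x $ a"
    "incid tlA hdA *v x = (\<chi> i. (if i = orig then 1 else 0) - (if i = dest then 1 else 0))"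
    using path_flow[OF assms(2)] by blast
  moreover have "(\<chi> i. (if i = orig then 1 else 0) - (if i = dest then 1 else 0)) = bvec orig dest"
    using assms(1) by (auto simp: bvec_def vec_eq_iff)
  ultimately show ?thesis
    by (auto simp: flows_def)
qed

lemma fval_eq_minf: "\<not> (\<forall>k. 0 \<le> t $ k) \<Longrightarrow> f t = -\<infinity>"
  unfolding fval_def by auto

lemma fval_le: "\<forall>k. 0 \<le> t $ k \<Longrightarrow> x \<in> X \<Longrightarrow> f t \<le> ereal (c \<bullet> x + t \<bullet> restr ta x)"
  unfolding fval_def by (auto intro: INF_lower)

lemma fval_ge:
  "\<forall>k. 0 \<le> t $ k \<Longrightarrow> (\<And>x. x \<in> X \<Longrightarrow> m \<le> c \<bullet> x + t \<bullet> restr ta x) \<Longrightarrow> ereal m \<le> f t"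
  unfolding fval_def by (auto intro: INF_greatest)

lemma fval_finite:
  assumes "\<forall>a. 0 \<le> c $ a" "\<forall>k. 0 \<le> t $ k" "X \<noteq> {}"
  shows "\<exists>r. f t = ereal r"
proof -
  obtain x where "x \<in> X"
    using assms(3) by blast
  then have "f t \<le> ereal (c \<bullet> x + t \<bullet> restr ta x)"
    using fval_le[OF assms(2)] by blast
  moreover have "ereal 0 \<le> f t"
    using assms(1,2) by (intro fval_ge) (auto simp: flows_def intro!: add_nonneg_nonneg vec_inner_nonneg)
  ultimately show ?thesis
    by (cases "f t") auto
qed

lemma gval_ge_fval: "f t - ereal (t \<bullet> w) \<le> g w"
  unfolding gval_def by (rule SUP_upper) simp

lemma gval_le_iff: "g w \<le> ereal z \<longleftrightarrow> (\<forall>t. f t \<le> ereal (t \<bullet> w + z))"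
  unfolding gval_def by (simp add: SUP_le_iff ereal_minus_le add.commute)

lemma gval_lower_bound:
  assumes "\<forall>k. 0 \<le> t $ k" "\<And>x. x \<in> X \<Longrightarrow> m \<le> c \<bullet> x + t \<bullet> restr ta x - t \<bullet> w"
  shows "ereal m \<le> g w"
proof -
  have "ereal (m + t \<bullet> w) \<le> f t"
    using assms by (intro fval_ge) force+
  then have "ereal (m + t \<bullet> w) - ereal (t \<bullet> w) \<le> g w"
    using gval_ge_fval[of t w] by (meson ereal_minus_mono order_refl order_trans)
  then show ?thesis
    by simp
qed

lemma gval_le_flow_cost:
  assumes "x \<in> X" "\<forall>k. x $ ta k \<le> w $ k"
  shows "g w \<le> ereal (c \<bullet> x)"
  unfolding gval_le_iff
proof
  fix t :: "real^'n"
  show "f t \<le> ereal (t \<bullet> w + c \<bullet> x)"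
  proof (cases "\<forall>k. 0 \<le> t $ k")
    case True
    then have "t \<bullet> restr ta x \<le> t \<bullet> w"
      using assms(2) vec_inner_nonneg[of t "w - restr ta x"] by (simp add: inner_diff_right)
    then show ?thesis
      using fval_le[OF True assms(1)] by (simp add: order_trans)
  qed (simp add: fval_eq_minf)
qed

lemma convex_gval_epigraph: "convex {(w, z). g w \<le> ereal z}"
proof -
  have "convex {(w, z). f t \<le> ereal (t \<bullet> w + z)}" for t
  proof (cases "f t")
    case (real r)
    then have "{(w, z). f t \<le> ereal (t \<bullet> w + z)} = {y. r \<le> (t, 1) \<bullet> y}"
      by auto
    then show ?thesis
      by (simp add: convex_halfspace_ge)
  qed simp_all
  moreover have "{(w, z). g w \<le> ereal z} = (\<Inter>t. {(w, z). f t \<le> ereal (t \<bullet> w + z)})"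
    by (auto simp: gval_le_iff)
  ultimately show ?thesis
    by (simp add: convex_INT)
qed

section \<open>The homogenised flow cone and LP duality\<close>

definition mass :: "(real^'e::finite) \<times> (real^'n::finite) \<times> real \<times> real \<Rightarrow> real" where
  "mass = (\<lambda>(x, s, r, l). sum (($) x) UNIV + sum (($) s) UNIV + r + l)"

lemma linear_mass: "linear mass"
  by (intro linearI) (auto simp: mass_def sum.distrib sum_distrib_left algebra_simps)

text \<open>In (x, s, r, l) the vector x is a flow of value l; the slacks s and r serve the capacity
  and cost constraints in dual_map below.\<close>

definition flow_cone :: "((real^'e) \<times> (real^'n::finite) \<times> real \<times> real) set" where
  "flow_cone = {(x, s, r, l). incid tlA hdA *v x = l *\<^sub>R bvec orig dest \<and> (\<forall>a. 0 \<le> x $ a)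
      \<and> (\<forall>k. 0 \<le> s $ k) \<and> 0 \<le> r \<and> 0 \<le> l}"

lemma conic_flow_cone: "conic flow_cone"
  by (auto simp: conic_def flow_cone_def matrix_vector_mult_scaleR)

lemma polyhedron_flow_cone: "polyhedron flow_cone"
proof -
  let ?N = "incid tlA hdA" and ?b = "bvec orig dest"
  let ?x = "\<lambda>q::(real^'e) \<times> (real^'n) \<times> real \<times> real. fst q"
  let ?s = "\<lambda>q::(real^'e) \<times> (real^'n) \<times> real \<times> real. fst (snd q)"
  let ?r = "\<lambda>q::(real^'e) \<times> (real^'n) \<times> real \<times> real. fst (snd (snd q))"
  let ?l = "\<lambda>q::(real^'e) \<times> (real^'n) \<times> real \<times> real. snd (snd (snd q))"
  have cone_eq: "flow_cone = (\<Inter>i. {q. (?N *v ?x q) $ i - ?l q * ?b $ i = 0}) \<inter> (\<Inter>a. {q. 0 \<le> ?x q $ a})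
      \<inter> (\<Inter>k. {q. 0 \<le> ?s q $ k}) \<inter> {q. 0 \<le> ?r q} \<inter> {q. 0 \<le> ?l q}"
    by (auto simp: flow_cone_def vec_eq_iff)
  have "linear (\<lambda>q. (?N *v ?x q) $ i - ?l q * ?b $ i)" for i
    by (intro linearI) (simp_all add: matrix_vector_right_distrib matrix_vector_mult_scaleR algebra_simps)
  moreover have "linear (\<lambda>q. ?x q $ a)" "linear (\<lambda>q. ?s q $ k)" "linear ?r" "linear ?l" for a k
    by (intro linearI; simp)+
  ultimately show ?thesis
    unfolding cone_eq
    by (intro polyhedron_Int polyhedron_INT polyhedron_linear_halfspace_ge polyhedron_linear_hyperplane)
qed

lemma bounded_flow_slice: "bounded (flow_cone \<inter> {q. mass q = 1})"
  unfolding bounded_iff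
proof (intro exI ballI)
  fix q assume "q \<in> flow_cone \<inter> {q. mass q = 1}"
  then obtain x s r l where q: "q = (x, s, r, l)" "\<forall>a. 0 \<le> x $ a" "\<forall>k. 0 \<le> s $ k" "0 \<le> r" "0 \<le> l"
      "mass q = 1"
    by (auto simp: flow_cone_def)
  have "norm q \<le> norm x + (norm s + (norm r + norm l))"
    unfolding q(1) by (meson add_left_mono norm_Pair_le order_trans)
  also have "\<dots> \<le> sum (\<lambda>a. \<bar>x $ a\<bar>) UNIV + (sum (\<lambda>k. \<bar>s $ k\<bar>) UNIV + (norm r + norm l))"
    by (intro add_mono norm_le_l1_cart order_refl)
  also have "\<dots> = mass q"
    using q by (simp add: mass_def)
  finally show "norm q \<le> 1"
    using q(6) by simp
qed

lemma polytope_flow_slice: "polytope (flow_cone \<inter> {q. mass q = 1})"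
  unfolding polytope_eq_bounded_polyhedron
  by (simp add: bounded_flow_slice polyhedron_flow_cone polyhedron_linear_hyperplane linear_mass)

lemma flow_cone_eq_conic_hull_slice: "flow_cone = conic hull (flow_cone \<inter> {q. mass q = 1})"
proof
  show "conic hull (flow_cone \<inter> {q. mass q = 1}) \<subseteq> flow_cone"
    by (intro hull_minimal conic_flow_cone) simp
next
  show "flow_cone \<subseteq> conic hull (flow_cone \<inter> {q. mass q = 1})"
  proof
    fix q assume q: "q \<in> flow_cone"
    show "q \<in> conic hull (flow_cone \<inter> {q. mass q = 1})"
    proof (cases "mass q = 0")
      case True
      obtain x s r l where "q = (x, s, r, l)" "\<forall>a. 0 \<le> x $ a" "\<forall>k. 0 \<le> s $ k" "0 \<le> r" "0 \<le> l"
        using q by (auto simp: flow_cone_def)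
      with True have "q = 0"
        by (auto simp: mass_def add_nonneg_eq_0_iff sum_nonneg sum_nonneg_eq_0_iff vec_eq_iff zero_prod_def)
      moreover have "(0, 0, 1, 0) \<in> flow_cone \<inter> {q. mass q = 1}"
        by (simp add: flow_cone_def mass_def)
      ultimately show ?thesis
        by auto
    next
      case False
      have "0 \<le> mass q"
        using q by (auto simp: flow_cone_def mass_def intro!: sum_nonneg add_nonneg_nonneg)
      then have "(1 / mass q) *\<^sub>R q \<in> flow_cone \<inter> {q. mass q = 1}"
        using q False conicD[OF conic_flow_cone q, of "1 / mass q"]
        by (simp add: linear_scale[OF linear_mass])
      then have "mass q *\<^sub>R ((1 / mass q) *\<^sub>R q) \<in> conic hull (flow_cone \<inter> {q. mass q = 1})"
        using \<open>0 \<le> mass q\<close> by (intro conicD[OF conic_conic_hull] hull_inc)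
      then show ?thesis
        using False by simp
    qed
  qed
qed

lemma fval_epigraph_iff:
  assumes c: "\<forall>a. 0 \<le> c $ a" and t: "\<forall>k. 0 \<le> t $ k"
  shows "- f t \<le> ereal z \<longleftrightarrow> (\<forall>(x, s, r, l) \<in> flow_cone. 0 \<le> c \<bullet> x + t \<bullet> restr ta x + l * z)"
proof
  assume epi: "- f t \<le> ereal z"
  show "\<forall>(x, s, r, l) \<in> flow_cone. 0 \<le> c \<bullet> x + t \<bullet> restr ta x + l * z"
  proof clarify
    fix x s r l assume "(x, s, r, l) \<in> flow_cone"
    then have x: "incid tlA hdA *v x = l *\<^sub>R bvec orig dest" "\<forall>a. 0 \<le> x $ a" and "0 \<le> l"
      by (auto simp: flow_cone_def)
    have cost: "0 \<le> c \<bullet> x + t \<bullet> restr ta x"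
      using c t x(2) by (intro add_nonneg_nonneg vec_inner_nonneg) auto
    show "0 \<le> c \<bullet> x + t \<bullet> restr ta x + l * z"
    proof (cases "l = 0")
      case False
      with \<open>0 \<le> l\<close> have "0 < l"
        by simp
      then have "(1 / l) *\<^sub>R x \<in> X"
        using x by (simp add: flows_def matrix_vector_mult_scaleR)
      then have "f t \<le> ereal (c \<bullet> ((1 / l) *\<^sub>R x) + t \<bullet> restr ta ((1 / l) *\<^sub>R x))"
        by (rule fval_le[OF t])
      then have "f t \<le> ereal ((c \<bullet> x + t \<bullet> restr ta x) / l)"
        by (simp add: linear_scale[OF linear_restr] add_divide_distrib)
      moreover have "ereal (- z) \<le> f t"
        using epi by (simp add: ereal_uminus_le_reorder)
      ultimately have "- z \<le> (c \<bullet> x + t \<bullet> restr ta x) / l"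
        by (meson ereal_less_eq(3) order_trans)
      with \<open>0 < l\<close> show ?thesis
        by (simp add: field_simps)
    qed (use cost in simp)
  qed
next
  assume cone: "\<forall>(x, s, r, l) \<in> flow_cone. 0 \<le> c \<bullet> x + t \<bullet> restr ta x + l * z"
  have "- z \<le> c \<bullet> x + t \<bullet> restr ta x" if "x \<in> X" for x
    using that cone[rule_format, of "(x, 0, 0, 1)"] by (auto simp: flow_cone_def flows_def)
  then have "ereal (- z) \<le> f t"
    using fval_ge[OF t] by blast
  then show "- f t \<le> ereal z"
    by (simp add: ereal_uminus_le_reorder)
qed

lemma polyhedron_fval_epigraph:
  assumes c: "\<forall>a. 0 \<le> c $ a"
  shows "polyhedron {(t, z). - f t \<le> ereal z}"
proof -
  obtain S where S: "finite S" "flow_cone \<inter> {q. mass q = 1} = convex hull S"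
    using polytope_flow_slice unfolding polytope_def by blast
  define \<phi> :: "(real^'e) \<times> (real^'n) \<times> real \<times> real \<Rightarrow> (real^'n) \<times> real \<Rightarrow> real"
    where "\<phi> q = (\<lambda>(t, z). t \<bullet> restr ta (fst q) + z * snd (snd (snd q)))" for q
  have lin: "linear (\<phi> q)" for q
    by (intro linearI) (auto simp: \<phi>_def inner_add_left algebra_simps)
  have cone_hull: "flow_cone = conic hull (convex hull S)"
    using flow_cone_eq_conic_hull_slice unfolding S(2) .
  have on_vertices: "(\<forall>q\<in>flow_cone. 0 \<le> c \<bullet> fst q + \<phi> q (t, z)) \<longleftrightarrow> (\<forall>q\<in>S. - (c \<bullet> fst q) \<le> \<phi> q (t, z))"
    for t z
  proof -
    define \<psi> where "\<psi> q = c \<bullet> fst q + \<phi> q (t, z)" for q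
    have "linear \<psi>"
      by (intro linearI) (simp_all add: \<psi>_def \<phi>_def linear_add[OF linear_restr] linear_scale[OF linear_restr]
          inner_add_right algebra_simps)
    then have "convex {q. 0 \<le> \<psi> q}" "conic {q. 0 \<le> \<psi> q}"
      by (simp_all add: conic_def linear_scale polyhedron_imp_convex polyhedron_linear_halfspace_ge)
    then have hull: "flow_cone \<subseteq> {q. 0 \<le> \<psi> q}" if "S \<subseteq> {q. 0 \<le> \<psi> q}"
      unfolding cone_hull using that by (intro hull_minimal) auto
    have "S \<subseteq> flow_cone"
      unfolding cone_hull by (meson hull_subset subset_trans)
    show ?thesis
    proof
      assume "\<forall>q\<in>flow_cone. 0 \<le> c \<bullet> fst q + \<phi> q (t, z)"
      with \<open>S \<subseteq> flow_cone\<close> show "\<forall>q\<in>S. - (c \<bullet> fst q) \<le> \<phi> q (t, z)"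
        by fastforce
    next
      assume "\<forall>q\<in>S. - (c \<bullet> fst q) \<le> \<phi> q (t, z)"
      then have "S \<subseteq> {q. 0 \<le> \<psi> q}"
        by (auto simp: \<psi>_def)
      with hull show "\<forall>q\<in>flow_cone. 0 \<le> c \<bullet> fst q + \<phi> q (t, z)"
        by (auto simp: \<psi>_def)
    qed
  qed
  have "- f t \<le> ereal z \<longleftrightarrow> (\<forall>k. 0 \<le> t $ k) \<and> (\<forall>q\<in>S. - (c \<bullet> fst q) \<le> \<phi> q (t, z))" for t z
  proof (cases "\<forall>k. 0 \<le> t $ k")
    case True
    then show ?thesis
      unfolding fval_epigraph_iff[OF c True] on_vertices[symmetric]
      by (simp add: \<phi>_def Ball_def split_paired_all algebra_simps)
  qed (simp add: fval_eq_minf)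
  then have epi_eq: "{(t, z). - f t \<le> ereal z} = (\<Inter>k. {y. 0 \<le> fst y $ k}) \<inter> (\<Inter>q\<in>S. {y. - (c \<bullet> fst q) \<le> \<phi> q y})"
    by auto
  have "linear (\<lambda>y::(real^'n) \<times> real. fst y $ k)" for k
    by (intro linearI) simp_all
  then show ?thesis
    unfolding epi_eq using S(1)
    by (auto intro!: polyhedron_Int polyhedron_INT polyhedron_Inter polyhedron_linear_halfspace_ge lin)
qed

lemma gval_gt_if_separated:
  assumes c: "\<forall>a. 0 \<le> c $ a" and \<tau>: "\<forall>k. 0 \<le> \<tau> $ k" and "0 \<le> \<beta>" "\<beta> * \<gamma> < m"
    and sep: "\<And>x. x \<in> X \<Longrightarrow> m \<le> \<tau> \<bullet> (restr ta x - w) + \<beta> * (c \<bullet> x)"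
  shows "ereal \<gamma> < g w"
proof (cases "\<beta> = 0")
  case False
  with \<open>0 \<le> \<beta>\<close> have "0 < \<beta>"
    by simp
  have "ereal (m / \<beta>) \<le> g w"
  proof (rule gval_lower_bound)
    show "\<forall>k. 0 \<le> ((1 / \<beta>) *\<^sub>R \<tau>) $ k"
      using \<tau> \<open>0 < \<beta>\<close> by simp
    fix x assume "x \<in> X"
    have "m / \<beta> \<le> (\<tau> \<bullet> (restr ta x - w) + \<beta> * (c \<bullet> x)) / \<beta>"
      using sep[OF \<open>x \<in> X\<close>] \<open>0 < \<beta>\<close> by (simp add: divide_right_mono)
    also have "\<dots> = c \<bullet> x + (1 / \<beta>) *\<^sub>R \<tau> \<bullet> restr ta x - (1 / \<beta>) *\<^sub>R \<tau> \<bullet> w"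
      using \<open>0 < \<beta>\<close> by (simp add: field_simps inner_diff_right)
    finally show "m / \<beta> \<le> c \<bullet> x + (1 / \<beta>) *\<^sub>R \<tau> \<bullet> restr ta x - (1 / \<beta>) *\<^sub>R \<tau> \<bullet> w" .
  qed
  moreover have "ereal \<gamma> < ereal (m / \<beta>)"
    using \<open>0 < \<beta>\<close> \<open>\<beta> * \<gamma> < m\<close> by (simp add: field_simps)
  ultimately show ?thesis
    using less_le_trans by blast
next
  case True
  then have "0 < m"
    using \<open>\<beta> * \<gamma> < m\<close> by simp
  have "ereal (k * m) \<le> g w" if "0 \<le> k" for k
  proof (rule gval_lower_bound)
    show "\<forall>i. 0 \<le> (k *\<^sub>R \<tau>) $ i"
      using \<tau> \<open>0 \<le> k\<close> by simp
    fix x assume "x \<in> X"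
    then have "k * m \<le> k * (\<tau> \<bullet> (restr ta x - w))" and "0 \<le> c \<bullet> x"
      using sep True \<open>0 \<le> k\<close> c by (auto simp: flows_def intro: mult_left_mono vec_inner_nonneg)
    then show "k * m \<le> c \<bullet> x + k *\<^sub>R \<tau> \<bullet> restr ta x - k *\<^sub>R \<tau> \<bullet> w"
      by (simp add: inner_diff_right algebra_simps)
  qed
  from this[of "(\<bar>\<gamma>\<bar> + 1) / m"] \<open>0 < m\<close> have "ereal (\<bar>\<gamma>\<bar> + 1) \<le> g w"
    by simp
  moreover have "ereal \<gamma> < ereal (\<bar>\<gamma>\<bar> + 1)"
    by simp
  ultimately show ?thesis
    using less_le_trans by blast
qed

text \<open>(0, \<gamma>, 1) \<in> dual_map w ` flow_cone means that some flow x of value 1 has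
  restr ta x \<le> w and c \<bullet> x \<le> \<gamma>.\<close>

definition dual_map :: "real^'n \<Rightarrow> (real^'e) \<times> (real^'n) \<times> real \<times> real \<Rightarrow> (real^'n) \<times> real \<times> real"
  where "dual_map w = (\<lambda>(x, s, r, l). (restr ta x - l *\<^sub>R w + s, c \<bullet> x + r, l))"

lemma linear_dual_map: "linear (dual_map w)"
  by (intro linearI) (auto simp: dual_map_def linear_add[OF linear_restr] linear_scale[OF linear_restr]
      algebra_simps inner_add_right)

lemma polyhedron_dual_map_image: "polyhedron (dual_map w ` flow_cone)"
proof -
  have "dual_map w ` flow_cone = conic hull (dual_map w ` (flow_cone \<inter> {q. mass q = 1}))"
    by (subst flow_cone_eq_conic_hull_slice) (simp add: conic_hull_linear_image[OF linear_dual_map])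
  then show ?thesis
    by (simp add: polyhedron_conic_hull_polytope polytope_linear_image[OF linear_dual_map] polytope_flow_slice)
qed

lemma gval_gt_if_not_in_dual_map_image:
  assumes c: "\<forall>a. 0 \<le> c $ a" and notin: "(0, \<gamma>, 1) \<notin> dual_map w ` flow_cone"
  shows "ereal \<gamma> < g w"
proof -
  have "conic (dual_map w ` flow_cone)"
    by (rule conic_linear_image[OF conic_flow_cone linear_dual_map])
  moreover have "(0, 0, 0, 0) \<in> flow_cone"
    by (simp add: flow_cone_def)
  then have "dual_map w ` flow_cone \<noteq> {}"
    by blast
  ultimately obtain a where "a \<bullet> (0, \<gamma>, 1) < 0" and "\<And>y. y \<in> dual_map w ` flow_cone \<Longrightarrow> 0 \<le> a \<bullet> y"
    using separating_hyperplane_closed_cone notin polyhedron_dual_map_image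
    by (metis polyhedron_imp_closed polyhedron_imp_convex)
  then have a: "a \<bullet> (0, \<gamma>, 1) < 0" "\<And>q. q \<in> flow_cone \<Longrightarrow> 0 \<le> a \<bullet> dual_map w q"
    by auto
  obtain \<tau> \<beta> \<mu> where a_eq: "a = (\<tau>, \<beta>, \<mu>)"
    by (metis prod_cases3)
  have "(0, axis k 1, 0, 0) \<in> flow_cone" for k
    by (simp add: flow_cone_def axis_def)
  then have "0 \<le> \<tau> $ k" for k
    using a(2) by (fastforce simp: dual_map_def a_eq inner_axis)
  moreover have "0 \<le> \<beta>"
    using a(2)[of "(0, 0, 1, 0)"] by (simp add: flow_cone_def dual_map_def a_eq)
  moreover have "- \<mu> \<le> \<tau> \<bullet> (restr ta x - w) + \<beta> * (c \<bullet> x)" if "x \<in> X" for x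
    using that a(2)[of "(x, 0, 0, 1)"] by (simp add: flow_cone_def flows_def dual_map_def a_eq)
  moreover have "\<beta> * \<gamma> < - \<mu>"
    using a(1) by (simp add: a_eq)
  ultimately show ?thesis
    using gval_gt_if_separated[OF c] by blast
qed

lemma gval_strong_duality:
  assumes c: "\<forall>a. 0 \<le> c $ a" and g: "g w = ereal \<gamma>"
  shows "\<exists>x\<in>X. (\<forall>k. x $ ta k \<le> w $ k) \<and> c \<bullet> x \<le> \<gamma>"
proof -
  have "(0, \<gamma>, 1) \<in> dual_map w ` flow_cone"
    using gval_gt_if_not_in_dual_map_image[OF c] g by force
  then obtain x s r l where "(x, s, r, l) \<in> flow_cone" "dual_map w (x, s, r, l) = (0, \<gamma>, 1)"
    by (metis (no_types, opaque_lifting) image_iff prod_cases4)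
  then have x: "x \<in> X" "restr ta x - w + s = 0" "c \<bullet> x + r = \<gamma>" and "\<forall>k. 0 \<le> s $ k" "0 \<le> r"
    by (auto simp: dual_map_def flow_cone_def flows_def)
  have "x $ ta k \<le> w $ k" for k
    using arg_cong[OF x(2), of "\<lambda>v. v $ k"] spec[OF \<open>\<forall>k. 0 \<le> s $ k\<close>, of k] by simp
  moreover have "c \<bullet> x \<le> \<gamma>"
    using x(3) \<open>0 \<le> r\<close> by linarith
  ultimately show ?thesis
    using x(1) by blast
qed

lemma Wset_iff_gval:
  assumes c: "\<forall>a. 0 \<le> c $ a" and t: "\<forall>k. 0 \<le> t $ k" and "X \<noteq> {}"
  shows "w \<in> Wset tlA hdA orig dest c ta t \<longleftrightarrow> g w = f t - ereal (t \<bullet> w)"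
proof -
  obtain r where r: "f t = ereal r"
    using fval_finite[OF c t \<open>X \<noteq> {}\<close>] by blast
  have "g w = ereal (r - t \<bullet> w)" if optimal: "w \<in> Wset tlA hdA orig dest c ta t"
  proof -
    obtain x where x: "wfeas tlA hdA orig dest ta w x"
      and opt: "\<And>w' x'. wfeas tlA hdA orig dest ta w' x' \<Longrightarrow> c \<bullet> x + t \<bullet> w \<le> c \<bullet> x' + t \<bullet> w'"
      using optimal by (auto simp: Wset_def)
    have "x \<in> X" "\<forall>k. x $ ta k \<le> w $ k"
      using x by (auto simp: wfeas_def flows_def)
    then have "g w \<le> ereal (c \<bullet> x)"
      by (rule gval_le_flow_cost)
    moreover have "ereal (c \<bullet> x + t \<bullet> w) \<le> f t"
      using opt by (intro fval_ge[OF t]) (auto simp: wfeas_def flows_def)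
    moreover have "f t - ereal (t \<bullet> w) \<le> g w"
      by (rule gval_ge_fval)
    ultimately have "g w \<le> ereal (r - t \<bullet> w)" "ereal (r - t \<bullet> w) \<le> g w"
      using r by (simp_all add: order_trans)
    then show ?thesis
      by (rule antisym)
  qed
  moreover have "w \<in> Wset tlA hdA orig dest c ta t" if g: "g w = ereal (r - t \<bullet> w)"
  proof -
    obtain x where x: "x \<in> X" "\<forall>k. x $ ta k \<le> w $ k" "c \<bullet> x \<le> r - t \<bullet> w"
      using gval_strong_duality[OF c g] by blast
    have "c \<bullet> x + t \<bullet> w \<le> c \<bullet> x' + t \<bullet> w'" if "wfeas tlA hdA orig dest ta w' x'" for w' x'
    proof -
      have "x' \<in> X" "0 \<le> t \<bullet> (w' - restr ta x')"
        using that t by (auto simp: wfeas_def flows_def intro!: vec_inner_nonneg)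
      then have "r \<le> c \<bullet> x' + t \<bullet> w'"
        using fval_le[OF t] r by (fastforce simp: inner_diff_right)
      with x(3) show ?thesis
        by simp
    qed
    moreover have "wfeas tlA hdA orig dest ta w x"
      using x by (fastforce simp: wfeas_def flows_def intro: order_trans)
    ultimately show ?thesis
      unfolding Wset_def by blast
  qed
  ultimately show ?thesis
    using r by auto
qed

section \<open>Action sets and reaction sets\<close>

lemma action_set_affine_majorant:
  assumes c: "\<forall>a. 0 \<le> c $ a" and "X \<noteq> {}" and "action_set tlA hdA orig dest c ta T"
  obtains w0 \<gamma> where "T \<noteq> {}" "\<And>t. f t \<le> ereal (t \<bullet> w0 + \<gamma>)" "\<And>t. t \<in> T \<Longrightarrow> f t = ereal (t \<bullet> w0 + \<gamma>)"
proof -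
  let ?P = "{(t, z). - f t \<le> ereal z}"
  obtain F where F: "F face_of ?P" "F \<noteq> {}" "nonvertical F" "T = fst ` F"
    using assms(3) unfolding action_set_def by blast
  have up: "y + (0, d) \<in> ?P" if "y \<in> ?P" "0 \<le> d" for y d
    using that by (auto intro: order_trans)
  obtain u \<delta> where below: "\<And>t z. (t, z) \<in> ?P \<Longrightarrow> u \<bullet> t + \<delta> \<le> z"
    and F_eq: "F = {(t, z) \<in> ?P. z = u \<bullet> t + \<delta>}"
    using nonvertical_face_of_upward_polyhedron[of ?P F, OF polyhedron_fval_epigraph[OF c] up F(1-3)] by blast
  have le: "f t \<le> ereal (t \<bullet> - u + - \<delta>)" for t
  proof (cases "\<forall>k. 0 \<le> t $ k")
    case True
    then obtain r where r: "f t = ereal r"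
      using fval_finite[OF c _ \<open>X \<noteq> {}\<close>] by blast
    then have "u \<bullet> t + \<delta> \<le> - r"
      using below[of t "- r"] by simp
    then show ?thesis
      using r by (simp add: inner_commute)
  qed (simp add: fval_eq_minf)
  have "f t = ereal (t \<bullet> - u + - \<delta>)" if "t \<in> T" for t
  proof -
    obtain z where "- f t \<le> ereal z" "z = u \<bullet> t + \<delta>"
      using \<open>t \<in> T\<close> F(4) F_eq by auto
    then have "ereal (t \<bullet> - u + - \<delta>) \<le> f t"
      by (simp add: ereal_uminus_le_reorder inner_commute)
    with le show ?thesis
      by (simp add: antisym)
  qed
  moreover have "T \<noteq> {}"
    using F(2,4) by blast
  ultimately show thesis
    using that le by blast
qed

lemma reaction_set_of_affine_majorant:
  assumes c: "\<forall>a. 0 \<le> c $ a" and "X \<noteq> {}" "T \<noteq> {}"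
    and le: "\<And>t. f t \<le> ereal (t \<bullet> w0 + \<gamma>)" and eq: "\<And>t. t \<in> T \<Longrightarrow> f t = ereal (t \<bullet> w0 + \<gamma>)"
  shows "reaction_set tlA hdA orig dest c ta (\<Inter>t\<in>T. Wset tlA hdA orig dest c ta t)"
proof -
  let ?E = "{(w, z). g w \<le> ereal z}"
  define G where "G = {y \<in> ?E. \<forall>a \<in> (\<lambda>t. (t, 1)) ` T. a \<bullet> y = a \<bullet> (w0, \<gamma>)}"
  have "(t, 1) \<bullet> (w0, \<gamma>) \<le> (t, 1) \<bullet> y" if "t \<in> T" "y \<in> ?E" for t y
  proof -
    obtain w z where "y = (w, z)" "g w \<le> ereal z"
      using \<open>y \<in> ?E\<close> by blast
    then have "f t \<le> ereal (t \<bullet> w + z)"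
      by (simp add: gval_le_iff)
    with \<open>y = (w, z)\<close> show ?thesis
      using eq[OF \<open>t \<in> T\<close>] by simp
  qed
  then have "G face_of ?E"
    unfolding G_def by (intro face_of_common_minimizers convex_gval_epigraph) auto
  moreover have "(w0, \<gamma>) \<in> G"
    using le by (simp add: G_def gval_le_iff)
  moreover have "nonvertical G"
  proof -
    obtain t0 where "t0 \<in> T"
      using \<open>T \<noteq> {}\<close> by blast
    then have "G \<subseteq> {y. (t0, 1) \<bullet> y = (t0, 1) \<bullet> (w0, \<gamma>)}"
      by (auto simp: G_def)
    then show ?thesis
      by (rule nonvertical_if_subset_hyperplane)
  qed
  moreover have "fst ` G = (\<Inter>t\<in>T. Wset tlA hdA orig dest c ta t)"
  proof -
    have nonneg: "\<forall>k. 0 \<le> t $ k" if "t \<in> T" for t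
      using eq[OF that] fval_eq_minf by force
    have W_iff: "w \<in> (\<Inter>t\<in>T. Wset tlA hdA orig dest c ta t) \<longleftrightarrow> (\<forall>t\<in>T. g w = ereal (t \<bullet> w0 + \<gamma> - t \<bullet> w))"
      for w
      using Wset_iff_gval[OF c nonneg \<open>X \<noteq> {}\<close>] eq by simp
    have G_iff: "w \<in> fst ` G \<longleftrightarrow> (\<forall>t\<in>T. g w = ereal (t \<bullet> w0 + \<gamma> - t \<bullet> w))" for w
    proof
      assume "w \<in> fst ` G"
      then obtain z where "g w \<le> ereal z" "\<forall>t\<in>T. t \<bullet> w + z = t \<bullet> w0 + \<gamma>"
        by (auto simp: G_def)
      moreover have "ereal (t \<bullet> w0 + \<gamma> - t \<bullet> w) \<le> g w" if "t \<in> T" for t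
        using gval_ge_fval[of t w] eq[OF that] by simp
      ultimately show "\<forall>t\<in>T. g w = ereal (t \<bullet> w0 + \<gamma> - t \<bullet> w)"
        by (metis add_diff_cancel_left' antisym)
    next
      assume gw: "\<forall>t\<in>T. g w = ereal (t \<bullet> w0 + \<gamma> - t \<bullet> w)"
      obtain t0 where "t0 \<in> T"
        using \<open>T \<noteq> {}\<close> by blast
      moreover have "t \<bullet> w + (t0 \<bullet> w0 + \<gamma> - t0 \<bullet> w) = t \<bullet> w0 + \<gamma>" if "t \<in> T" for t
        using gw[rule_format, OF that] gw[rule_format, OF \<open>t0 \<in> T\<close>] by simp
      ultimately have "(w, t0 \<bullet> w0 + \<gamma> - t0 \<bullet> w) \<in> G"
        using gw by (simp add: G_def)
      then show "w \<in> fst ` G"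
        by force
    qed
    show ?thesis
      by (rule set_eqI) (simp only: W_iff G_iff)
  qed
  ultimately show ?thesis
    unfolding reaction_set_def by (intro exI[of _ G]) auto
qed

end

theorem proposition2:
  fixes tlA hdA :: "'e::finite \<Rightarrow> 'v::finite"
    and c :: "real^'e" and ta :: "'n::finite \<Rightarrow> 'e" and orig dest :: 'v
    and T :: "(real^'n) set"
  assumes c_nonneg: "\<forall>a. 0 \<le> c $ a"
    and ta_inj: "inj ta"
    and A1_proper: "range ta \<noteq> UNIV"
    and odestdistinct: "orig \<noteq> dest"
    and odestpath: "(orig, dest) \<in> {(tlA a, hdA a) | a. a \<notin> range ta}\<^sup>*"
    and T_action: "action_set tlA hdA orig dest c ta T"
  shows "reaction_set tlA hdA orig dest c ta (\<Inter>t\<in>T. Wset tlA hdA orig dest c ta t)"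
proof -
  have "flows tlA hdA orig dest \<noteq> {}"
    by (rule flows_nonempty[OF odestdistinct odestpath])
  then obtain w0 \<gamma> where "T \<noteq> {}"
    "\<And>t. fval tlA hdA orig dest c ta t \<le> ereal (t \<bullet> w0 + \<gamma>)"
    "\<And>t. t \<in> T \<Longrightarrow> fval tlA hdA orig dest c ta t = ereal (t \<bullet> w0 + \<gamma>)"
    using action_set_affine_majorant[OF c_nonneg _ T_action] by blast
  with c_nonneg \<open>flows tlA hdA orig dest \<noteq> {}\<close> show ?thesis
    by (rule reaction_set_of_affine_majorant)
qed

end
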